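(* Let $P=\sum_{k\in\mathbb{Z}}\alpha_kx^k+\sum_{k\in\mathbb{Z}}\beta_k\,yx^k$ (finitely many nonzero terms) with all $\alpha_k,\beta_k\in\mathbb{R}$, and suppose $P$ is reciprocal as an element of $\mathbb{R}[\mathbb{Z}\times\mathbb{Z}/2\mathbb{Z}]$, where $\mathbb{Z}\times\mathbb{Z}/2\mathbb{Z}=\langle x,y\mid y^2,[x,y]\rangle$. Regard $P$ also as an element of $\mathbb{C}[D_\infty]$, where $D_\infty=\langle x,y\mid y^2,yxyx\rangle$ (same coefficients, same words). Let $k=\sum_k(|\alpha_k|+|\beta_k|)$ and $|\lambda|<1/k$. Then \[ m_{\mathbb{Z}\times\mathbb{Z}/2\mathbb{Z}}(P,\lambda)=m_{D_\infty}(P,\lambda). \]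
   Context: For a group $\Gamma$ and $Q=\sum_{g\in\Gamma}c_g g\in\mathbb{C}\Gamma$ (finite sum), the reciprocal is $Q^*=\sum_g\overline{c_g}\,g^{-1}$, and $Q$ is reciprocal if $Q=Q^*$. For reciprocal $P\in\mathbb{C}\Gamma$ with $l_1$-norm $k=\sum_g|c_g|$ and $|\lambda|<1/k$, define $m_\Gamma(P,\lambda)=-\sum_{n\ge1}a_n\lambda^n/n$, where $a_n$ is the coefficient of the identity element of $\Gamma$ in $P^n$. In the paper $D_\infty$ is written $\langle\rho,\sigma\mid\sigma^2,\sigma\rho\sigma\rho\rangle$ with $x=\rho$, $y=\sigma$. *)

theory Defs
  imports Complex_Main
begin

text \<open>Finitely supported elements of a group ring C[G] are functions G => complex
  with finite support. The group is given by its multiplication, identity and inverse.\<close>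

definition gr_mult :: "('g \<Rightarrow> 'g \<Rightarrow> 'g) \<Rightarrow> ('g \<Rightarrow> complex) \<Rightarrow> ('g \<Rightarrow> complex) \<Rightarrow> 'g \<Rightarrow> complex" where
  "gr_mult mul f h z = (\<Sum>(u,v)\<in>{(u,v). f u \<noteq> 0 \<and> h v \<noteq> 0 \<and> mul u v = z}. f u * h v)"

definition gr_unit :: "'g \<Rightarrow> 'g \<Rightarrow> complex" where
  "gr_unit e g = (if g = e then 1 else 0)"

fun gr_pow :: "('g \<Rightarrow> 'g \<Rightarrow> 'g) \<Rightarrow> 'g \<Rightarrow> ('g \<Rightarrow> complex) \<Rightarrow> nat \<Rightarrow> 'g \<Rightarrow> complex" where
  "gr_pow mul e f 0 = gr_unit e"
| "gr_pow mul e f (Suc n) = gr_mult mul (gr_pow mul e f n) f"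

definition reciprocal :: "('g \<Rightarrow> 'g) \<Rightarrow> ('g \<Rightarrow> complex) \<Rightarrow> bool" where
  "reciprocal ginv f \<longleftrightarrow> (\<forall>g. f (ginv g) = cnj (f g))"

definition l1_norm :: "('g \<Rightarrow> complex) \<Rightarrow> real" where
  "l1_norm f = (\<Sum>g\<in>{g. f g \<noteq> 0}. norm (f g))"

definition mG :: "('g \<Rightarrow> 'g \<Rightarrow> 'g) \<Rightarrow> 'g \<Rightarrow> ('g \<Rightarrow> complex) \<Rightarrow> complex \<Rightarrow> complex" where
  "mG mul e f lam = - (\<Sum>n. gr_pow mul e f (Suc n) e * lam ^ Suc n / of_nat (Suc n))"

text \<open>Elements are encoded as (k, b) meaning y^b x^k (b = True means a factor y).\<close>

definition zz2_mul :: "int \<times> bool \<Rightarrow> int \<times> bool \<Rightarrow> int \<times> bool" where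
  "zz2_mul p q = (fst p + fst q, snd p \<noteq> snd q)"

definition zz2_inv :: "int \<times> bool \<Rightarrow> int \<times> bool" where
  "zz2_inv p = (- fst p, snd p)"

text \<open>D_infinity = < x, y | y^2, yxyx >, so x^a y = y x^(-a) and
  (y^b x^a)(y^d x^c) = y^(b+d) x^((-1)^d a + c).\<close>
definition dinf_mul :: "int \<times> bool \<Rightarrow> int \<times> bool \<Rightarrow> int \<times> bool" where
  "dinf_mul p q = ((if snd q then - fst p else fst p) + fst q, snd p \<noteq> snd q)"

definition dinf_inv :: "int \<times> bool \<Rightarrow> int \<times> bool" where
  "dinf_inv p = (if snd p then p else (- fst p, False))"

definition elemP :: "(int \<Rightarrow> real) \<Rightarrow> (int \<Rightarrow> real) \<Rightarrow> int \<times> bool \<Rightarrow> complex" where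
  "elemP \<alpha> \<beta> p = (if snd p then complex_of_real (\<beta> (fst p)) else complex_of_real (\<alpha> (fst p)))"

end

theory Submission
  imports Defs
begin

text \<open>In both groups an element is written \<open>y\<^sup>b x\<^sup>k\<close>; the two multiplications differ
  only in that right multiplication by \<open>y\<close> negates the exponent of \<open>x\<close> in \<open>D\<^sub>\<infinity>\<close>.
  Since \<open>P\<close> has real coefficients, being reciprocal in \<open>\<int> \<times> \<int>/2\<close> means exactly that its
  coefficients are invariant under \<open>k \<mapsto> -k\<close>. This invariance is inherited by every power
  \<open>P\<^sup>n\<close> in \<open>\<int> \<times> \<int>/2\<close>, so the convolution recursions computing \<open>P\<^sup>n\<close> in the two group
  rings agree term by term. Hence \<open>P\<^sup>n\<close> is the same function in both group rings for every
  \<open>n\<close>, and the two series defining \<open>m(P,\<lambda>)\<close> coincide term by term.\<close>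

lemma gr_mult_eq_sum:
  assumes "finite S" and "\<And>v. h v \<noteq> 0 \<Longrightarrow> v \<in> S"
    and "\<And>u v. mul u v = z \<longleftrightarrow> u = d v"
  shows "gr_mult mul f h z = (\<Sum>v\<in>S. f (d v) * h v)"
proof -
  have supp: "{(u,v). f u \<noteq> 0 \<and> h v \<noteq> 0 \<and> mul u v = z}
      = (\<lambda>v. (d v, v)) ` {v\<in>S. h v \<noteq> 0 \<and> f (d v) \<noteq> 0}"
    using assms(2,3) by auto
  have "gr_mult mul f h z = (\<Sum>v\<in>{v\<in>S. h v \<noteq> 0 \<and> f (d v) \<noteq> 0}. f (d v) * h v)"
    unfolding gr_mult_def supp by (subst sum.reindex) (auto simp: inj_on_def)
  also have "\<dots> = (\<Sum>v\<in>S. f (d v) * h v)"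
    by (rule sum.mono_neutral_left) (use assms(1) in auto)
  finally show ?thesis .
qed

lemma gr_pow_zz2_Suc:
  assumes "finite {v. f v \<noteq> 0}"
  shows "gr_pow zz2_mul e f (Suc n) z
    = (\<Sum>v | f v \<noteq> 0. gr_pow zz2_mul e f n (fst z - fst v, snd z \<noteq> snd v) * f v)"
  unfolding gr_pow.simps
  by (rule gr_mult_eq_sum[OF assms]) (auto simp: zz2_mul_def prod_eq_iff)

lemma gr_pow_dinf_Suc:
  assumes "finite {v. f v \<noteq> 0}"
  shows "gr_pow dinf_mul e f (Suc n) z
    = (\<Sum>v | f v \<noteq> 0. gr_pow dinf_mul e f n
         (if snd v then fst v - fst z else fst z - fst v, snd z \<noteq> snd v) * f v)"
  unfolding gr_pow.simps
  by (rule gr_mult_eq_sum[OF assms]) (auto simp: dinf_mul_def prod_eq_iff)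

lemma gr_pow_zz2_even:
  assumes fin: "finite {v. f v \<noteq> 0}" and even: "\<And>k b. f (- k, b) = f (k, b)"
  shows "gr_pow zz2_mul (0, False) f n (- k, b) = gr_pow zz2_mul (0, False) f n (k, b)"
proof (induction n arbitrary: k b)
  case 0
  show ?case by (simp add: gr_unit_def)
next
  case (Suc n)
  let ?A = "gr_pow zz2_mul (0, False) f n"
  have "gr_pow zz2_mul (0, False) f (Suc n) (- k, b)
      = (\<Sum>v | f v \<noteq> 0. ?A (- k - fst v, b \<noteq> snd v) * f v)"
    unfolding gr_pow_zz2_Suc[OF fin] by simp
  also have "\<dots> = (\<Sum>v | f v \<noteq> 0. ?A (k - fst v, b \<noteq> snd v) * f v)"
  proof (rule sum.reindex_bij_witness[where i="\<lambda>v. (- fst v, snd v)" and j="\<lambda>v. (- fst v, snd v)"])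
    fix v :: "int \<times> bool"
    show "?A (k - fst (- fst v, snd v), b \<noteq> snd (- fst v, snd v)) * f (- fst v, snd v)
        = ?A (- k - fst v, b \<noteq> snd v) * f v"
      using Suc.IH[of "k + fst v" "b \<noteq> snd v"] even[of "fst v" "snd v"] by simp
  qed (use even in auto)
  also have "\<dots> = gr_pow zz2_mul (0, False) f (Suc n) (k, b)"
    unfolding gr_pow_zz2_Suc[OF fin] by simp
  finally show ?case .
qed

lemma gr_pow_dinf_eq_zz2:
  assumes fin: "finite {v. f v \<noteq> 0}" and even: "\<And>k b. f (- k, b) = f (k, b)"
  shows "gr_pow dinf_mul (0, False) f n = gr_pow zz2_mul (0, False) f n"
proof (induction n)
  case 0
  show ?case by simp
next
  case (Suc n)
  show ?case
  proof
    fix z :: "int \<times> bool"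
    show "gr_pow dinf_mul (0, False) f (Suc n) z = gr_pow zz2_mul (0, False) f (Suc n) z"
      unfolding gr_pow_dinf_Suc[OF fin] gr_pow_zz2_Suc[OF fin] Suc.IH
      using gr_pow_zz2_even[OF fin even, of n "fst z - fst v" for v] by (intro sum.cong) auto
  qed
qed

lemma finite_support_elemP:
  assumes "finite {k. \<alpha> k \<noteq> 0}" and "finite {k. \<beta> k \<noteq> 0}"
  shows "finite {v. elemP \<alpha> \<beta> v \<noteq> 0}"
proof (rule finite_subset)
  show "{v. elemP \<alpha> \<beta> v \<noteq> 0} \<subseteq> {k. \<alpha> k \<noteq> 0} \<times> {False} \<union> {k. \<beta> k \<noteq> 0} \<times> {True}"
    by (auto simp: elemP_def split: if_splits)
qed (use assms in auto)

lemma reciprocal_zz2_elemP_even: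
  assumes "reciprocal zz2_inv (elemP \<alpha> \<beta>)"
  shows "elemP \<alpha> \<beta> (- k, b) = elemP \<alpha> \<beta> (k, b)"
proof -
  have "elemP \<alpha> \<beta> (- k, b) = cnj (elemP \<alpha> \<beta> (k, b))"
    using assms unfolding reciprocal_def zz2_inv_def by (metis fst_conv snd_conv)
  then show ?thesis by (simp add: elemP_def)
qed

theorem corollary7p4:
  fixes \<alpha> \<beta> :: "int \<Rightarrow> real" and lam :: complex
  assumes "finite {k. \<alpha> k \<noteq> 0}" and "finite {k. \<beta> k \<noteq> 0}"
    and "reciprocal zz2_inv (elemP \<alpha> \<beta>)"
    and "norm lam * l1_norm (elemP \<alpha> \<beta>) < 1"
  shows "mG zz2_mul (0, False) (elemP \<alpha> \<beta>) lam = mG dinf_mul (0, False) (elemP \<alpha> \<beta>) lam"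
proof -
  have "gr_pow dinf_mul (0, False) (elemP \<alpha> \<beta>) n = gr_pow zz2_mul (0, False) (elemP \<alpha> \<beta>) n" for n
    using gr_pow_dinf_eq_zz2[OF finite_support_elemP[OF assms(1,2)]]
      reciprocal_zz2_elemP_even[OF assms(3)] by blast
  then show ?thesis unfolding mG_def by (simp del: gr_pow.simps)
qed

end
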